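(* Assume $Y=X\beta_\star+\epsilon$ with $\epsilon\sim N(0,\sigma_\star^2 I_n)$, where $\sigma_\star^2>0$. Assume $X\in\mathbb R^{n\times p}$ has nonzero, pairwise orthogonal columns, i.e. $\langle x_k,x_j\rangle=0$ for $j\neq k$. Take $\sigma^2=\sigma_\star^2$, and let $\hat\gamma_n$ be a maximizer of $\gamma\mapsto\ell(\sigma_\star^2,\gamma)$ over $[0,\infty)^p$ (computed from the data $Y$) satisfying the coordinatewise characterization below. Then for every $j\in\{1,\ldots,p\}$ with $\beta_{\star,j}=0$, \[\mathbb P\left[\hat\gamma_{n,j}=0\right]=\mathbb P\left[Z^2\le 1\right]\ (\approx 0.68),\] where $Z\sim N(0,1)$.
   Context: For $\gamma\in[0,\infty)^p$ let $I_\gamma=\{j:\gamma_j\neq0\}$ and $C_\gamma=\sigma^2 I_n+\sum_{j\in I_\gamma}\gamma_j x_jx_j'$. Define $\ell(\sigma^2,\gamma)=-\tfrac12\log\det(C_\gamma)-\tfrac12\operatorname{Tr}(C_\gamma^{-1}YY')$. Coordinatewise characterization required of $\hat\gamma_n$: for every $j$, with $C_j=\sigma^2 I_n+\sum_{k\in I_{\hat\gamma_n}\setminus\{j\}}\hat\gamma_{n,k}x_kx_k'$, one has $\hat\gamma_{n,j}=\big((x_j'C_j^{-1}Y)^2-x_j'C_j^{-1}x_j\big)/(x_j'C_j^{-1}x_j)^2$ if $(x_j'C_j^{-1}Y)^2>x_j'C_j^{-1}x_j$, and $\hat\gamma_{n,j}=0$ otherwise. In particular, $\hat\gamma_{n,j}=0$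 if and only if $(x_j'C_j^{-1}Y)^2\le x_j'C_j^{-1}x_j$. *)

theory Defs
  imports "HOL-Analysis.Analysis" "HOL-Probability.Probability"
begin

definition outer :: "real^'n \<Rightarrow> real^'n \<Rightarrow> real^'n^'n" where
  "outer x y = (\<chi> i k. x $ i * y $ k)"

definition supp_idx :: "real^'p \<Rightarrow> 'p set" where
  "supp_idx \<gamma> = {j. \<gamma> $ j \<noteq> 0}"

definition Cmat_on :: "real^'p^'n \<Rightarrow> real \<Rightarrow> real^'p \<Rightarrow> 'p set \<Rightarrow> real^'n^'n" where
  "Cmat_on X s2 \<gamma> S = s2 *\<^sub>R mat 1 + (\<Sum>k\<in>S. \<gamma> $ k *\<^sub>R outer (column k X) (column k X))"

definition Cmat :: "real^'p^'n \<Rightarrow> real \<Rightarrow> real^'p \<Rightarrow> real^'n^'n" where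
  "Cmat X s2 \<gamma> = Cmat_on X s2 \<gamma> (supp_idx \<gamma>)"

definition loglik :: "real^'p^'n \<Rightarrow> real^'n \<Rightarrow> real \<Rightarrow> real^'p \<Rightarrow> real" where
  "loglik X Y s2 \<gamma> = - (1/2) * ln (det (Cmat X s2 \<gamma>))
                      - (1/2) * trace (matrix_inv (Cmat X s2 \<gamma>) ** outer Y Y)"

definition coord_char :: "real^'p^'n \<Rightarrow> real^'n \<Rightarrow> real \<Rightarrow> real^'p \<Rightarrow> 'p \<Rightarrow> bool" where
  "coord_char X Y s2 g j =
     (let Cj = Cmat_on X s2 g (supp_idx g - {j});
          xj = column j X;
          a = xj \<bullet> (matrix_inv Cj *v Y);
          b = xj \<bullet> (matrix_inv Cj *v xj)
      in g $ j = (if a\<^sup>2 > b then (a\<^sup>2 - b) / b\<^sup>2 else 0))"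

definition gauss_noise :: "real \<Rightarrow> (real^'n) measure" where
  "gauss_noise s2 = density lborel (\<lambda>e. ennreal (\<Prod>i\<in>UNIV. normal_density 0 (sqrt s2) (e $ i)))"

definition std_normal :: "real measure" where
  "std_normal = density lborel (\<lambda>z. ennreal (std_normal_density z))"

end

theory Submission
  imports Defs
begin

text \<open>
  With orthogonal columns, the other columns contribute nothing to \<open>x\<^sub>j' C\<^sub>j\<close>, so
  \<open>x\<^sub>j' C\<^sub>j = \<sigma>\<^sup>2 x\<^sub>j'\<close> and hence \<open>x\<^sub>j' C\<^sub>j\<^sup>-\<^sup>1 v = x\<^sub>j' v / \<sigma>\<^sup>2\<close>: the coordinatewise
  characterization says \<open>\<gamma>\<^sub>j = 0\<close> exactly when \<open>(x\<^sub>j' Y)\<^sup>2 \<le> \<sigma>\<^sup>2 |x\<^sub>j|\<^sup>2\<close>, whatever the other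
  coordinates are. If \<open>\<beta>\<^sub>j = 0\<close>, orthogonality also gives \<open>x\<^sub>j' Y = x\<^sub>j' \<epsilon>\<close>, a linear combination of
  independent centered normals, hence \<open>N(0, \<sigma>\<^sup>2 |x\<^sub>j|\<^sup>2)\<close>; after standardization the event is
  \<open>Z\<^sup>2 \<le> 1\<close>.
\<close>

lemma Cmat_on_mult_vec:
  fixes X :: "real^'p^'n"
  assumes "finite S"
  shows "Cmat_on X s2 g S *v w = s2 *\<^sub>R w + (\<Sum>k\<in>S. (g $ k * (column k X \<bullet> w)) *\<^sub>R column k X)"
proof -
  have if_add: "(if P then (a::real) + b else b) = (if P then a else 0) + b" for P a b
    by simp
  show ?thesis
    unfolding Cmat_on_def
    apply (simp add: vec_eq_iff matrix_vector_mult_def outer_def mat_def sum_component inner_vec_def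
        sum_distrib_left sum_distrib_right if_distrib if_distribR algebra_simps
        cong del: if_weak_cong)
    apply (simp add: if_add sum.distrib cong del: if_weak_cong)
    apply (subst sum.swap)
    apply simp
    done
qed

lemma inner_Cmat_on_self:
  fixes X :: "real^'p^'n"
  assumes "finite S"
  shows "w \<bullet> (Cmat_on X s2 g S *v w) = s2 * (w \<bullet> w) + (\<Sum>k\<in>S. g $ k * (column k X \<bullet> w)\<^sup>2)"
  unfolding Cmat_on_mult_vec[OF assms]
  by (simp add: inner_add_right inner_sum_right power2_eq_square algebra_simps inner_commute)

lemma invertible_Cmat_on:
  fixes X :: "real^'p^'n"
  assumes "finite S" and "s2 > 0" and "\<And>k. k \<in> S \<Longrightarrow> g $ k \<ge> 0"
  shows "invertible (Cmat_on X s2 g S)"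
proof -
  have "w = 0" if "Cmat_on X s2 g S *v w = 0" for w
  proof -
    have "(\<Sum>k\<in>S. g $ k * (column k X \<bullet> w)\<^sup>2) \<ge> 0"
      by (intro sum_nonneg mult_nonneg_nonneg assms(3)) simp_all
    with that inner_Cmat_on_self[OF assms(1), of w X s2 g] have "s2 * (w \<bullet> w) \<le> 0"
      by simp
    with \<open>s2 > 0\<close> have "w \<bullet> w \<le> 0"
      by (simp add: mult_le_0_iff)
    then show "w = 0"
      using inner_ge_zero[of w] by (simp add: order_antisym)
  qed
  then show ?thesis
    by (simp add: invertible_left_inverse matrix_left_invertible_ker)
qed

lemma matrix_mul_matrix_inv_right:
  fixes A :: "'a::semiring_1^'n^'m"
  assumes "invertible A"
  shows "A ** matrix_inv A = mat 1"
  using assms unfolding invertible_def matrix_inv_def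
  by (rule someI2_ex) simp

lemma column_inner_Cmat_on:
  fixes X :: "real^'p^'n"
  assumes "finite S" and "\<And>k. k \<in> S \<Longrightarrow> column j X \<bullet> column k X = 0"
  shows "column j X \<bullet> (Cmat_on X s2 g S *v w) = s2 * (column j X \<bullet> w)"
  using assms(2)
  by (simp add: Cmat_on_mult_vec[OF assms(1)] inner_add_right inner_sum_right)

lemma column_inner_matrix_inv_Cmat_on:
  fixes X :: "real^'p^'n"
  assumes "finite S" and "s2 > 0" and "\<And>k. k \<in> S \<Longrightarrow> g $ k \<ge> 0"
    and "\<And>k. k \<in> S \<Longrightarrow> column j X \<bullet> column k X = 0"
  shows "column j X \<bullet> (matrix_inv (Cmat_on X s2 g S) *v v) = (column j X \<bullet> v) / s2"
proof -
  let ?C = "Cmat_on X s2 g S"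
  have "invertible ?C"
    using invertible_Cmat_on[OF assms(1-3)] .
  then have "?C *v (matrix_inv ?C *v v) = v"
    by (simp add: matrix_vector_mul_assoc matrix_mul_matrix_inv_right)
  moreover have "column j X \<bullet> (?C *v u) = s2 * (column j X \<bullet> u)" for u
    using column_inner_Cmat_on[OF assms(1,4)] .
  ultimately have "s2 * (column j X \<bullet> (matrix_inv ?C *v v)) = column j X \<bullet> v"
    by metis
  with \<open>s2 > 0\<close> show ?thesis
    by (simp add: field_simps)
qed

lemma coord_char_eq_zero_iff:
  fixes X :: "real^'p^'n" and g :: "real^'p"
  assumes "s2 > 0" and "column j X \<noteq> 0"
    and "\<And>k. k \<noteq> j \<Longrightarrow> column j X \<bullet> column k X = 0"
    and "\<And>k. g $ k \<ge> 0"
    and "coord_char X Y s2 g j"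
  shows "g $ j = 0 \<longleftrightarrow> (column j X \<bullet> Y)\<^sup>2 \<le> s2 * (column j X \<bullet> column j X)"
proof -
  define x where "x = column j X"
  define M where "M = matrix_inv (Cmat_on X s2 g (supp_idx g - {j}))"
  have a: "x \<bullet> (M *v Y) = (x \<bullet> Y) / s2" and b: "x \<bullet> (M *v x) = (x \<bullet> x) / s2"
    unfolding M_def x_def
    by (rule column_inner_matrix_inv_Cmat_on; use assms in auto)+
  have "x \<bullet> x > 0"
    using assms(2) by (simp add: x_def)
  with \<open>s2 > 0\<close> have "x \<bullet> (M *v x) > 0"
    by (simp add: b)
  moreover have "g $ j = (if (x \<bullet> (M *v Y))\<^sup>2 > x \<bullet> (M *v x)
      then ((x \<bullet> (M *v Y))\<^sup>2 - x \<bullet> (M *v x)) / (x \<bullet> (M *v x))\<^sup>2 else 0)"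
    using assms(5) unfolding coord_char_def Let_def M_def x_def .
  ultimately have "g $ j = 0 \<longleftrightarrow> (x \<bullet> (M *v Y))\<^sup>2 \<le> x \<bullet> (M *v x)"
    by (auto simp: not_less)
  also have "\<dots> \<longleftrightarrow> (x \<bullet> Y)\<^sup>2 \<le> s2 * (x \<bullet> x)"
    unfolding a b using \<open>s2 > 0\<close> by (simp add: power_divide field_simps power2_eq_square)
  finally show ?thesis
    unfolding x_def .
qed

lemma column_inner_matrix_vector_mult:
  fixes X :: "real^'p^'n"
  assumes "\<And>k. k \<noteq> j \<Longrightarrow> column j X \<bullet> column k X = 0"
  shows "column j X \<bullet> (X *v \<beta>) = \<beta> $ j * (column j X \<bullet> column j X)"
proof -
  have "column j X \<bullet> (X *v \<beta>) = (\<Sum>k\<in>UNIV. \<beta> $ k * (column j X \<bullet> column k X))"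
    by (simp add: matrix_mult_sum inner_sum_right scalar_mult_eq_scaleR)
  also have "\<dots> = \<beta> $ j * (column j X \<bullet> column j X)"
    using assms by (subst sum.remove[of UNIV j]) simp_all
  finally show ?thesis .
qed

lemma nn_integral_lborel_prod_vec:
  fixes f :: "'n::finite \<Rightarrow> real \<Rightarrow> ennreal"
  assumes [measurable]: "\<And>i. f i \<in> borel_measurable borel"
  shows "(\<integral>\<^sup>+x. (\<Prod>i\<in>UNIV. f i (x $ i)) \<partial>(lborel :: (real^'n) measure))
       = (\<Prod>i\<in>UNIV. \<integral>\<^sup>+t. f i t \<partial>lborel)"
proof -
  define idx where "idx b = (SOME i. b = axis i (1::real))" for b :: "real^'n"
  have idx: "idx (axis i 1) = i" for i
    unfolding idx_def by (rule some_equality) (auto simp: axis_eq_axis)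
  have Basis: "(Basis :: (real^'n) set) = range (\<lambda>i. axis i 1)"
    by (auto simp: Basis_vec_def)
  have inj: "inj (\<lambda>i::'n. axis i (1::real))"
    by (auto simp: inj_def axis_eq_axis)
  have "(\<integral>\<^sup>+x. (\<Prod>b\<in>Basis. f (idx b) (x \<bullet> b)) \<partial>(lborel :: (real^'n) measure))
      = (\<Prod>b\<in>Basis. \<integral>\<^sup>+t. f (idx b) t \<partial>lborel)"
    by (rule nn_integral_lborel_prod) auto
  then show ?thesis
    unfolding Basis by (simp add: prod.reindex[OF inj] idx inner_axis)
qed

lemma distr_density_prod_vec_eq_PiM:
  fixes f :: "'n::finite \<Rightarrow> real \<Rightarrow> real"
  assumes [measurable]: "\<And>i. f i \<in> borel_measurable borel"
    and f_nonneg: "\<And>i t. f i t \<ge> 0"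
    and prob: "\<And>i. prob_space (density lborel (f i))"
  shows "distr (density lborel (\<lambda>e. ennreal (\<Prod>i\<in>UNIV. f i (e $ i))))
              (PiM UNIV (\<lambda>i. density lborel (f i))) (\<lambda>e i. e $ i)
       = PiM UNIV (\<lambda>i. density lborel (f i))"
    (is "distr ?D ?P ?T = ?P")
proof -
  interpret product_sigma_finite "\<lambda>i. density lborel (f i)"
    using prob by (simp add: product_sigma_finite_def prob_space_imp_sigma_finite)
  have T: "?T \<in> measurable ?D ?P"
    by (rule measurable_PiM_single') (auto simp: measurable_cong_sets[OF refl sets_density])
  show ?thesis
  proof (rule PiM_eqI)
    fix A :: "'n \<Rightarrow> real set"
    assume "\<And>i. i \<in> UNIV \<Longrightarrow> A i \<in> sets (density lborel (f i))"
    then have A[measurable]: "A i \<in> sets borel" for i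
      by simp
    have "?T -` PiE UNIV A \<inter> space ?D = {e. \<forall>i. e $ i \<in> A i}"
      by (auto simp: PiE_def)
    then have "emeasure (distr ?D ?P ?T) (PiE UNIV A) = emeasure ?D {e. \<forall>i. e $ i \<in> A i}"
      using T by (simp add: emeasure_distr sets_PiM_I_finite)
    also have "\<dots> = (\<integral>\<^sup>+e. (\<Prod>i\<in>UNIV. ennreal (f i (e $ i)) * indicator (A i) (e $ i)) \<partial>lborel)"
      by (subst emeasure_density)
         (auto intro!: nn_integral_cong simp: prod.distrib prod_ennreal f_nonneg indicator_def)
    also have "\<dots> = (\<Prod>i\<in>UNIV. \<integral>\<^sup>+t. ennreal (f i t) * indicator (A i) t \<partial>lborel)"
      by (rule nn_integral_lborel_prod_vec) measurable
    also have "\<dots> = (\<Prod>i\<in>UNIV. emeasure (density lborel (f i)) (A i))"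
      by (simp add: emeasure_density)
    finally show "emeasure (distr ?D ?P ?T) (PiE UNIV A) = (\<Prod>i\<in>UNIV. emeasure (density lborel (f i)) (A i))" .
  qed simp_all
qed

lemma indep_vars_PiM_components:
  assumes "\<And>i. i \<in> I \<Longrightarrow> prob_space (M i)" and "I \<noteq> {}"
  shows "prob_space.indep_vars (PiM I M) M (\<lambda>i \<omega>. \<omega> i) I"
proof -
  interpret prob_space "PiM I M"
    using assms(1) by (rule prob_space_PiM)
  have "distr (PiM I M) (PiM I M) (\<lambda>\<omega>. \<lambda>i\<in>I. \<omega> i) = distr (PiM I M) (PiM I M) (\<lambda>\<omega>. \<omega>)"
    by (rule distr_cong) (auto simp: space_PiM)
  also have "\<dots> = PiM I (\<lambda>i. distr (PiM I M) (M i) (\<lambda>\<omega>. \<omega> i))"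
    by (auto intro!: PiM_cong distr_PiM_component[symmetric] assms(1))
  finally show ?thesis
    by (subst indep_vars_iff_distr_eq_PiM') (simp_all add: assms(2))
qed

definition centered_normal :: "real \<Rightarrow> real measure" where
  "centered_normal v = density lborel (\<lambda>t. ennreal (normal_density 0 (sqrt v) t))"

lemma prob_space_centered_normal: "v > 0 \<Longrightarrow> prob_space (centered_normal v)"
  unfolding centered_normal_def by (simp add: prob_space_normal_density)

lemma sets_centered_normal [simp]: "sets (centered_normal v) = sets borel"
  by (simp add: centered_normal_def)

lemma distributed_PiM_centered_normal_component:
  assumes "v > 0" and "i \<in> I"
  shows "distributed (PiM I (\<lambda>_. centered_normal v)) lborel (\<lambda>\<omega>. \<omega> i) (normal_density 0 (sqrt v))"
proof -
  let ?P = "PiM I (\<lambda>_. centered_normal v)"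
  have "distr ?P lborel (\<lambda>\<omega>. \<omega> i) = distr ?P (centered_normal v) (\<lambda>\<omega>. \<omega> i)"
    by (rule distr_cong) auto
  also have "\<dots> = centered_normal v"
    by (rule distr_PiM_component) (simp_all add: prob_space_centered_normal assms)
  finally show ?thesis
    using measurable_component_singleton[OF assms(2), of "\<lambda>_. centered_normal v"]
    by (simp add: distributed_def centered_normal_def measurable_cong_sets[OF refl sets_centered_normal])
qed

lemma indep_vars_PiM_centered_normal:
  assumes "v > 0" and "I \<noteq> {}"
  shows "prob_space.indep_vars (PiM I (\<lambda>_. centered_normal v)) (\<lambda>_. borel) (\<lambda>i \<omega>. \<omega> i) I"
proof -
  have "prob_space.indep_vars (PiM I (\<lambda>_. centered_normal v)) (\<lambda>_. centered_normal v) (\<lambda>i \<omega>. \<omega> i) I"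
    by (rule indep_vars_PiM_components) (simp_all add: prob_space_centered_normal assms)
  then show ?thesis
    unfolding prob_space.indep_vars_def2[OF prob_space_PiM[OF prob_space_centered_normal[OF assms(1)]]]
    by (simp add: measurable_cong_sets[OF refl sets_centered_normal])
qed

lemma distributed_iid_normal_linear_combination:
  fixes x :: "real^'n::finite"
  assumes v: "v > 0" and x: "x \<noteq> 0"
  defines "P \<equiv> PiM UNIV (\<lambda>_::'n. centered_normal v)"
  shows "distributed P lborel (\<lambda>\<omega>. (\<Sum>i\<in>UNIV. x $ i * \<omega> i) / sqrt (v * (x \<bullet> x))) std_normal_density"
proof -
  interpret prob_space P
    unfolding P_def by (intro prob_space_PiM prob_space_centered_normal v)
  \<comment> \<open>Coordinates with vanishing weight are dropped: the Gaussian sum rule needs positive variances.\<close>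
  define I where "I = {i. x $ i \<noteq> 0}"
  have I: "finite I" "I \<noteq> {}"
    using x by (auto simp: I_def vec_eq_iff)
  have "distributed P lborel (\<lambda>\<omega>. \<Sum>i\<in>I. x $ i * \<omega> i)
          (normal_density (\<Sum>i\<in>I. 0) (sqrt (\<Sum>i\<in>I. (\<bar>x $ i\<bar> * sqrt v)\<^sup>2)))"
  proof (rule sum_indep_normal[OF I])
    have "indep_vars (\<lambda>_. borel) (\<lambda>i \<omega>. \<omega> i) UNIV"
      unfolding P_def by (rule indep_vars_PiM_centered_normal[OF v]) simp
    then show "indep_vars (\<lambda>_. borel) (\<lambda>i \<omega>. x $ i * \<omega> i) I"
      by (rule indep_vars_compose2[OF indep_vars_subset]) auto
    have "distributed P lborel (\<lambda>\<omega>. \<omega> i) (normal_density 0 (sqrt v))" for i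
      unfolding P_def by (rule distributed_PiM_centered_normal_component[OF v]) simp
    then show "distributed P lborel (\<lambda>\<omega>. x $ i * \<omega> i) (normal_density 0 (\<bar>x $ i\<bar> * sqrt v))"
      if "i \<in> I" for i
      using normal_density_affine[of _ 0 "sqrt v" "x $ i" 0] that v by (simp add: I_def)
  qed (use v in \<open>auto simp: I_def\<close>)
  moreover have "(\<Sum>i\<in>I. (\<bar>x $ i\<bar> * sqrt v)\<^sup>2) = v * (x \<bullet> x)"
  proof -
    have "(\<Sum>i\<in>I. (\<bar>x $ i\<bar> * sqrt v)\<^sup>2) = (\<Sum>i\<in>I. v * (x $ i * x $ i))"
      using v by (simp add: power_mult_distrib) (simp add: power2_eq_square mult.commute)
    also have "\<dots> = (\<Sum>i\<in>UNIV. v * (x $ i * x $ i))"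
      by (rule sum.mono_neutral_left) (auto simp: I_def)
    finally show ?thesis
      by (simp add: inner_vec_def sum_distrib_left)
  qed
  moreover have "(\<Sum>i\<in>I. x $ i * \<omega> i) = (\<Sum>i\<in>UNIV. x $ i * \<omega> i)" for \<omega>
    by (rule sum.mono_neutral_left) (auto simp: I_def)
  ultimately have "distributed P lborel (\<lambda>\<omega>. \<Sum>i\<in>UNIV. x $ i * \<omega> i) (normal_density 0 (sqrt (v * (x \<bullet> x))))"
    by simp
  then have "distributed P lborel
      (\<lambda>\<omega>. ((\<Sum>i\<in>UNIV. x $ i * \<omega> i) - 0) / sqrt (v * (x \<bullet> x))) std_normal_density"
    by (rule normal_standard_normal_convert[THEN iffD1, rotated]) (use v x in simp)
  then show ?thesis
    by simp
qed

lemma distr_gauss_noise_coordinates: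
  assumes "v > 0"
  shows "distr (gauss_noise v) (PiM UNIV (\<lambda>_::'n::finite. centered_normal v)) (\<lambda>e i. e $ i)
       = PiM UNIV (\<lambda>_. centered_normal v)"
  unfolding gauss_noise_def centered_normal_def
  by (rule distr_density_prod_vec_eq_PiM) (simp_all add: prob_space_normal_density assms)

lemma distributed_gauss_noise_inner:
  fixes x :: "real^'n::finite"
  assumes v: "v > 0" and x: "x \<noteq> 0"
  shows "distributed (gauss_noise v) lborel (\<lambda>e. (x \<bullet> e) / sqrt (v * (x \<bullet> x))) std_normal_density"
proof -
  let ?P = "PiM UNIV (\<lambda>_::'n. centered_normal v)"
  let ?Z = "\<lambda>\<omega>. (\<Sum>i\<in>UNIV. x $ i * \<omega> i) / sqrt (v * (x \<bullet> x))"
  have Z: "distributed ?P lborel ?Z std_normal_density"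
    using distributed_iid_normal_linear_combination[OF v x] .
  have T: "(\<lambda>e i. e $ i) \<in> measurable (gauss_noise v) ?P"
    by (rule measurable_PiM_single')
       (auto simp: gauss_noise_def centered_normal_def measurable_cong_sets[OF refl sets_density])
  have "distr ?P lborel ?Z = distr (distr (gauss_noise v) ?P (\<lambda>e i. e $ i)) lborel ?Z"
    by (simp only: distr_gauss_noise_coordinates[OF v])
  also have "\<dots> = distr (gauss_noise v) lborel (?Z \<circ> (\<lambda>e i. e $ i))"
    by (rule distr_distr[OF distributed_measurable[OF Z] T])
  also have "\<dots> = distr (gauss_noise v) lborel (\<lambda>e. (x \<bullet> e) / sqrt (v * (x \<bullet> x)))"
    by (simp add: comp_def inner_vec_def)
  finally show ?thesis
    using Z measurable_comp[OF T distributed_measurable[OF Z]]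
    by (simp add: distributed_def comp_def inner_vec_def)
qed

lemma measure_gauss_noise_inner_sq_le:
  fixes x :: "real^'n::finite"
  assumes v: "v > 0" and x: "x \<noteq> 0"
  shows "measure (gauss_noise v) {e. (x \<bullet> e)\<^sup>2 \<le> v * (x \<bullet> x)} = measure std_normal {z. z\<^sup>2 \<le> 1}"
proof -
  let ?Z = "\<lambda>e. (x \<bullet> e) / sqrt (v * (x \<bullet> x))"
  have Z: "distributed (gauss_noise v) lborel ?Z std_normal_density"
    using distributed_gauss_noise_inner[OF v x] .
  have "v * (x \<bullet> x) > 0"
    using v x by simp
  then have "{e. (x \<bullet> e)\<^sup>2 \<le> v * (x \<bullet> x)} = ?Z -` {z. z\<^sup>2 \<le> 1} \<inter> space (gauss_noise v)"
    by (auto simp: gauss_noise_def power_divide)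
  also have "measure (gauss_noise v) \<dots> = measure (distr (gauss_noise v) lborel ?Z) {z. z\<^sup>2 \<le> 1}"
    by (rule measure_distr[symmetric]) (use distributed_measurable[OF Z] in auto)
  also have "\<dots> = measure std_normal {z. z\<^sup>2 \<le> 1}"
    using Z by (simp add: distributed_def std_normal_def)
  finally show ?thesis .
qed

theorem proposition2:
  fixes X :: "real^'p^'n" and \<beta> :: "real^'p" and s2 :: real
    and ghat :: "real^'n \<Rightarrow> real^'p" and j :: 'p
  assumes s2_pos: "s2 > 0"
    and cols_nonzero: "\<And>k. column k X \<noteq> 0"
    and cols_orth: "\<And>k l. k \<noteq> l \<Longrightarrow> column k X \<bullet> column l X = 0"
    and ghat_nonneg: "\<And>Y k. ghat Y $ k \<ge> 0"
    and ghat_max: "\<And>Y \<gamma>. (\<forall>k. \<gamma> $ k \<ge> 0) \<Longrightarrow> loglik X Y s2 \<gamma> \<le> loglik X Y s2 (ghat Y)"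
    and ghat_char: "\<And>Y k. coord_char X Y s2 (ghat Y) k"
    and beta_j: "\<beta> $ j = 0"
  shows "measure (gauss_noise s2) {e. ghat (X *v \<beta> + e) $ j = 0}
         = measure std_normal {z. z\<^sup>2 \<le> 1}"
proof -
  define x where "x = column j X"
  have "x \<bullet> (X *v \<beta>) = 0"
    using column_inner_matrix_vector_mult[of j X \<beta>] cols_orth beta_j by (simp add: x_def)
  then have "{e. ghat (X *v \<beta> + e) $ j = 0} = {e. (x \<bullet> e)\<^sup>2 \<le> s2 * (x \<bullet> x)}"
    using coord_char_eq_zero_iff[OF s2_pos cols_nonzero cols_orth ghat_nonneg ghat_char]
    by (simp add: x_def inner_add_right)
  also have "measure (gauss_noise s2) \<dots> = measure std_normal {z. z\<^sup>2 \<le> 1}"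
    unfolding x_def by (rule measure_gauss_noise_inner_sq_le[OF s2_pos cols_nonzero])
  finally show ?thesis .
qed

end
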